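(* Wilf equivalence partitions the set $\mathbb{P}^3$ of words of length 3 into the following equivalence classes: (1) $\{aaa\}$ for each $a\in\mathbb{P}$; (2) for $a<b$: $\{aab,aba,baa\}$; (3) for $a>b$: $\{aab,baa\}$ and $\{aba\}$; (4) for $a<b<c$: $\{bac,cab\}$ and $\{abc,acb,cba,bca\}$.
   Context: $\mathbb{P}$ is the set of positive integers with the usual order, $\mathbb{P}^*$ the finite words over $\mathbb{P}$, $\mathbb{P}^3$ the words of length 3. For $w=w_1\ldots w_n$, $\mathrm{wt}(w)=t^nx^{\sum_iw_i}$. For words $u,w$, $u\le w$ if there are $|u|$ consecutive letters of $w$ whose $i$-th letter is $\ge$ the $i$-th letter of $u$ for each $i$. $F(u;t,x)=\sum_{w:\,u\le w}\mathrm{wt}(w)$ and $u\backsim v$ (Wilf equivalence) iff $F(u;t,x)=F(v;t,x)$. *)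

theory Defs
  imports Main
begin

definition pword :: "nat list \<Rightarrow> bool" where
  "pword w \<longleftrightarrow> (\<forall>a\<in>set w. 1 \<le> a)"

definition P3 :: "nat list set" where
  "P3 = {w. pword w \<and> length w = 3}"

definition pat_le :: "nat list \<Rightarrow> nat list \<Rightarrow> bool" where
  "pat_le u w \<longleftrightarrow> (\<exists>i. i + length u \<le> length w \<and> (\<forall>j<length u. u ! j \<le> w ! (i + j)))"

text \<open>The generating function F(u;t,x) = sum over words w with u \<le> w of t^|w| x^(sum w),
  represented by its coefficient array: coefficient of t^n x^m.\<close>
definition Fgen :: "nat list \<Rightarrow> nat \<Rightarrow> nat \<Rightarrow> nat" where
  "Fgen u n m = card {w. pword w \<and> pat_le u w \<and> length w = n \<and> sum_list w = m}"

definition wilf_equiv :: "nat list \<Rightarrow> nat list \<Rightarrow> bool" where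
  "wilf_equiv u v \<longleftrightarrow> Fgen u = Fgen v"

definition listed_classes :: "nat list set set" where
  "listed_classes =
     {{[a,a,a]} | a. 1 \<le> a}
   \<union> {{[a,a,b],[a,b,a],[b,a,a]} | a b. 1 \<le> a \<and> a < b}
   \<union> {{[a,a,b],[b,a,a]} | a b. 1 \<le> b \<and> b < a}
   \<union> {{[a,b,a]} | a b. 1 \<le> b \<and> b < a}
   \<union> {{[b,a,c],[c,a,b]} | a b c. 1 \<le> a \<and> a < b \<and> b < c}
   \<union> {{[a,b,c],[a,c,b],[c,b,a],[b,c,a]} | a b c. 1 \<le> a \<and> a < b \<and> b < c}"

end

theory Submission
  imports Defs "HOL-Library.Multiset"
begin

(* Sufficiency (each listed set lies inside one Wilf class) comes from two involutions on
   words that preserve length and letter sum: reversal, which maps occurrences of [a,b,c] to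
   occurrences of [c,b,a], and the map phi a, which reverses every maximal block of letters
   >= a after its first letter and thereby exchanges occurrences of [a,p,q] and [a,q,p]
   whenever a <= p and a <= q.

   Necessity (distinct listed sets are not Wilf equivalent) comes from counting.  For words of
   length n <= 5 the occurrence set of [x,y,z] is a union of sets of words dominating a padded
   copy of the pattern; by inclusion-exclusion its counting function is an integer combination
   of the functions comp_count n e, where e is the weight of a lower-bound word.  These functions
   are linearly independent, so Wilf equivalence forces equality of the weights x+y+z,
   overlap1, and (as a multiset) overlap2/overlap12.  These invariants separate the listed
   classes, which is checked family by family.  The theorem then follows because the listed
   sets cover P3. *)

definition occ3 :: "nat \<Rightarrow> nat \<Rightarrow> nat \<Rightarrow> nat list \<Rightarrow> bool" where
  "occ3 a b c w \<longleftrightarrow> (\<exists>xs e f g ys. w = xs @ e # f # g # ys \<and> a \<le> e \<and> b \<le> f \<and> c \<le> g)"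

definition adj :: "nat \<Rightarrow> nat \<Rightarrow> nat list \<Rightarrow> bool" where
  "adj p q w \<longleftrightarrow> (\<exists>xs y z ys. w = xs @ y # z # ys \<and> p \<le> y \<and> q \<le> z)"

lemma occ3_Nil [simp]: "\<not> occ3 a b c []"
  by (simp add: occ3_def)

lemma adj_Nil [simp]: "\<not> adj p q []"
  by (simp add: adj_def)

lemma occ3_Cons:
  "occ3 a b c (x # w) \<longleftrightarrow>
     (\<exists>y z ys. w = y # z # ys \<and> a \<le> x \<and> b \<le> y \<and> c \<le> z) \<or> occ3 a b c w"
proof
  assume "occ3 a b c (x # w)"
  then obtain xs e f g ys where d: "x # w = xs @ e # f # g # ys" "a \<le> e" "b \<le> f" "c \<le> g"
    unfolding occ3_def by blast
  show "(\<exists>y z ys. w = y # z # ys \<and> a \<le> x \<and> b \<le> y \<and> c \<le> z) \<or> occ3 a b c w"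
  proof (cases xs)
    case Nil
    then show ?thesis using d by auto
  next
    case (Cons x' xs')
    then have "w = xs' @ e # f # g # ys" using d by simp
    then show ?thesis using d unfolding occ3_def by blast
  qed
next
  assume "(\<exists>y z ys. w = y # z # ys \<and> a \<le> x \<and> b \<le> y \<and> c \<le> z) \<or> occ3 a b c w"
  then show "occ3 a b c (x # w)"
    unfolding occ3_def by (metis append_Cons append_Nil)
qed

lemma adj_Cons:
  "adj p q (x # w) \<longleftrightarrow> (\<exists>z ys. w = z # ys \<and> p \<le> x \<and> q \<le> z) \<or> adj p q w"
proof
  assume "adj p q (x # w)"
  then obtain xs y z ys where d: "x # w = xs @ y # z # ys" "p \<le> y" "q \<le> z"
    unfolding adj_def by blast
  show "(\<exists>z ys. w = z # ys \<and> p \<le> x \<and> q \<le> z) \<or> adj p q w"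
  proof (cases xs)
    case Nil
    then show ?thesis using d by auto
  next
    case (Cons x' xs')
    then have "w = xs' @ y # z # ys" using d by simp
    then show ?thesis using d unfolding adj_def by blast
  qed
next
  assume "(\<exists>z ys. w = z # ys \<and> p \<le> x \<and> q \<le> z) \<or> adj p q w"
  then show "adj p q (x # w)"
    unfolding adj_def by (metis append_Cons append_Nil)
qed

(* A letter below a cannot take part in an occurrence of [a,p,q] when a <= p, q, so such a
   letter at the start of D separates the occurrences in xs @ D. *)
lemma occ3_barrier:
  assumes D: "D = [] \<or> hd D < a" and "a \<le> p" "a \<le> q"
  shows "occ3 a p q (xs @ D) \<longleftrightarrow> occ3 a p q xs \<or> occ3 a p q D"
proof (induction xs)
  case (Cons x xs)
  have "(\<exists>y z ys. xs @ D = y # z # ys \<and> p \<le> y \<and> q \<le> z) \<longleftrightarrow>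
        (\<exists>y z ys. xs = y # z # ys \<and> p \<le> y \<and> q \<le> z)"
    using assms by (cases xs; cases "tl xs"; cases D) auto
  then show ?case
    using Cons by (auto simp: occ3_Cons)
qed simp

(* Inside a block of letters >= a the first pattern letter is automatic: occurrences of
   [a,p,q] in x # R are exactly dominating adjacent pairs of R. *)
lemma occ3_run:
  assumes "a \<le> x" "\<forall>r\<in>set R. a \<le> r"
  shows "occ3 a p q (x # R) \<longleftrightarrow> adj p q R"
  using assms
proof (induction R arbitrary: x)
  case (Cons r R)
  then show ?case by (auto simp: occ3_Cons adj_Cons)
qed (simp add: occ3_Cons)

lemma occ3_rev_imp: "occ3 a b c w \<Longrightarrow> occ3 c b a (rev w)"
proof -
  assume "occ3 a b c w"
  then obtain xs e f g ys where "w = xs @ e # f # g # ys" "a \<le> e" "b \<le> f" "c \<le> g"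
    unfolding occ3_def by blast
  then have "rev w = rev ys @ g # f # e # rev xs" "c \<le> g" "b \<le> f" "a \<le> e"
    by simp_all
  then show ?thesis
    unfolding occ3_def by blast
qed

lemma occ3_rev: "occ3 a b c (rev w) \<longleftrightarrow> occ3 c b a w"
  using occ3_rev_imp[of a b c "rev w"] occ3_rev_imp[of c b a w] by auto

lemma adj_rev_imp: "adj p q w \<Longrightarrow> adj q p (rev w)"
proof -
  assume "adj p q w"
  then obtain xs y z ys where "w = xs @ y # z # ys" "p \<le> y" "q \<le> z"
    unfolding adj_def by blast
  then have "rev w = rev ys @ z # y # rev xs" "q \<le> z" "p \<le> y"
    by simp_all
  then show ?thesis
    unfolding adj_def by blast
qed

lemma adj_rev: "adj p q (rev w) \<longleftrightarrow> adj q p w"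
  using adj_rev_imp[of p q "rev w"] adj_rev_imp[of q p w] by auto

lemma pat_le_occ3: "pat_le [a,b,c] w \<longleftrightarrow> occ3 a b c w"
proof
  assume "pat_le [a,b,c] w"
  then obtain i where i0: "i + length [a,b,c] \<le> length w"
    and dom: "\<forall>j<length [a,b,c]. [a,b,c] ! j \<le> w ! (i + j)"
    unfolding pat_le_def by blast
  have i: "i + 3 \<le> length w"
    using i0 by simp
  have "drop i w = w!i # w!(i+1) # w!(i+2) # drop (i+3) w"
    using i by (simp add: Cons_nth_drop_Suc numeral_3_eq_3)
  then have "w = take i w @ w!i # w!(i+1) # w!(i+2) # drop (i+3) w"
    by (metis append_take_drop_id)
  moreover have "a \<le> w!i" "b \<le> w!(i+1)" "c \<le> w!(i+2)"
    using dom[rule_format, of 0] dom[rule_format, of 1] dom[rule_format, of 2] by auto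
  ultimately show "occ3 a b c w"
    unfolding occ3_def by blast
next
  assume "occ3 a b c w"
  then obtain xs e f g ys where w: "w = xs @ e # f # g # ys" "a \<le> e" "b \<le> f" "c \<le> g"
    unfolding occ3_def by blast
  show "pat_le [a,b,c] w"
    unfolding pat_le_def
  proof (intro exI[of _ "length xs"] conjI allI impI)
    show "length xs + length [a,b,c] \<le> length w"
      using w by simp
    fix j assume "j < length [a,b,c]"
    then have "j = 0 \<or> j = 1 \<or> j = 2"
      by auto
    then show "[a,b,c] ! j \<le> w ! (length xs + j)"
      using w by (auto simp: nth_append)
  qed
qed

lemma wilf_refl: "wilf_equiv u u"
  and wilf_sym: "wilf_equiv u v \<Longrightarrow> wilf_equiv v u"
  and wilf_trans: "wilf_equiv u v \<Longrightarrow> wilf_equiv v w \<Longrightarrow> wilf_equiv u w"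
  by (simp_all add: wilf_equiv_def)

lemma wilf_by_involution:
  assumes inv: "\<And>w. f (f w) = w" and len: "\<And>w. length (f w) = length w"
    and sum: "\<And>w. sum_list (f w) = sum_list w" and pw: "\<And>w. pword w \<Longrightarrow> pword (f w)"
    and pat: "\<And>w. pword w \<Longrightarrow> pat_le u w \<longleftrightarrow> pat_le v (f w)"
  shows "wilf_equiv u v"
  unfolding wilf_equiv_def
proof (intro ext)
  fix n m
  let ?W = "\<lambda>u. {w. pword w \<and> pat_le u w \<and> length w = n \<and> sum_list w = m}"
  have to_v: "f w \<in> ?W v" if "w \<in> ?W u" for w
    using that pat pw len sum by auto
  have to_u: "f w \<in> ?W u" if "w \<in> ?W v" for w
  proof -
    have "pat_le u (f w)"
      using that pat[of "f w"] pw inv by auto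
    then show ?thesis
      using that pw len sum by auto
  qed
  have "bij_betw f (?W u) (?W v)"
    by (rule bij_betw_byWitness[where f' = f]) (use inv to_u to_v in auto)
  then show "Fgen u n m = Fgen v n m"
    unfolding Fgen_def by (rule bij_betw_same_card)
qed

lemma wilf_rev: "wilf_equiv [a,b,c] [c,b,a]"
proof (rule wilf_by_involution[where f = rev])
  show "pat_le [a,b,c] w \<longleftrightarrow> pat_le [c,b,a] (rev w)" for w
    unfolding pat_le_occ3 occ3_rev ..
qed (auto simp: pword_def)

(* The involution behind [a,p,q] ~ [a,q,p] for a <= p, q: in every maximal block of letters
   >= a, keep the first letter and reverse the rest of the block. *)
function phi :: "nat \<Rightarrow> nat list \<Rightarrow> nat list" where
  "phi a [] = []"
| "phi a (x # xs) = (if x < a then x # phi a xs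
     else x # rev (takeWhile (\<lambda>y. a \<le> y) xs) @ phi a (dropWhile (\<lambda>y. a \<le> y) xs))"
  by pat_completeness auto
termination
  by (relation "measure (\<lambda>(a, xs). length xs)") (auto simp: le_imp_less_Suc length_dropWhile_le)

lemma phi_length [simp]: "length (phi a w) = length w"
  by (induction a w rule: phi.induct) (auto, metis length_append takeWhile_dropWhile_id)

lemma phi_set [simp]: "set (phi a w) = set w"
proof (induction a w rule: phi.induct)
  case (2 a x xs)
  have "set xs = set (takeWhile (\<lambda>y. a \<le> y) xs) \<union> set (dropWhile (\<lambda>y. a \<le> y) xs)"
    by (metis set_append takeWhile_dropWhile_id)
  then show ?case using 2 by auto
qed simp

lemma phi_sum [simp]: "sum_list (phi a w) = sum_list w"
  by (induction a w rule: phi.induct) (auto, metis sum_list_append takeWhile_dropWhile_id)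

lemma phi_barrier: "w = [] \<or> hd w < a \<Longrightarrow> phi a w = [] \<or> hd (phi a w) < a"
  by (cases w) auto

lemma dropWhile_barrier:
  "dropWhile (\<lambda>y. a \<le> y) xs = [] \<or> hd (dropWhile (\<lambda>y. a \<le> y) xs) < (a::nat)"
  by (induction xs) auto

lemma run_split:
  assumes "\<forall>r\<in>set R. a \<le> r" and "D = [] \<or> hd D < (a::nat)"
  shows "takeWhile (\<lambda>y. a \<le> y) (R @ D) = R" "dropWhile (\<lambda>y. a \<le> y) (R @ D) = D"
  using assms by (induction R) (cases D; auto)+

lemma phi_Cons_run:
  assumes "a \<le> x" "\<forall>r\<in>set R. a \<le> r" "D = [] \<or> hd D < a"
  shows "phi a (x # R @ D) = x # rev R @ phi a D"
  unfolding phi.simps(2) run_split[OF assms(2,3)] using assms(1) by simp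

lemma phi_phi [simp]: "phi a (phi a w) = w"
proof (induction a w rule: phi.induct)
  case (2 a x xs)
  show ?case
  proof (cases "x < a")
    case True
    then show ?thesis using 2 by simp
  next
    case False
    define R where "R = takeWhile (\<lambda>y. a \<le> y) xs"
    define D where "D = dropWhile (\<lambda>y. a \<le> y) xs"
    have R: "\<forall>r\<in>set R. a \<le> r" unfolding R_def by (auto dest: set_takeWhileD)
    have D: "D = [] \<or> hd D < a" unfolding D_def by (rule dropWhile_barrier)
    have "phi a (x # xs) = x # rev R @ phi a D"
      using False unfolding R_def D_def by simp
    moreover have "phi a (x # rev R @ phi a D) = x # rev (rev R) @ phi a (phi a D)"
      by (rule phi_Cons_run) (use False R phi_barrier[OF D] in auto)
    ultimately have "phi a (phi a (x # xs)) = x # R @ phi a (phi a D)"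
      by simp
    also have "\<dots> = x # xs"
      using 2(2)[OF False] unfolding R_def D_def by simp
    finally show ?thesis .
  qed
qed simp

(* phi a swaps occurrences of [a,p,q] and [a,q,p]: each block contributes the adjacent pairs
   of its tail, and these are reversed by phi. *)
lemma phi_occ3:
  assumes "a \<le> p" "a \<le> q"
  shows "occ3 a p q w \<longleftrightarrow> occ3 a q p (phi a w)"
  using assms
proof (induction a w rule: phi.induct)
  case (2 a x xs)
  show ?case
  proof (cases "x < a")
    case True
    then show ?thesis using 2 by (simp add: occ3_Cons)
  next
    case False
    define R where "R = takeWhile (\<lambda>y. a \<le> y) xs"
    define D where "D = dropWhile (\<lambda>y. a \<le> y) xs"
    have R: "\<forall>r\<in>set R. a \<le> r" unfolding R_def by (auto dest: set_takeWhileD)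
    have D: "D = [] \<or> hd D < a" unfolding D_def by (rule dropWhile_barrier)
    have "occ3 a p q (x # xs) \<longleftrightarrow> occ3 a p q (x # R) \<or> occ3 a p q D"
      using occ3_barrier[OF D 2(3,4), of "x # R"] unfolding R_def D_def by simp
    also have "\<dots> \<longleftrightarrow> adj p q R \<or> occ3 a q p (phi a D)"
      using occ3_run[of a x R p q] False R 2(2)[OF False 2(3,4)] unfolding D_def by simp
    also have "\<dots> \<longleftrightarrow> occ3 a q p (x # rev R) \<or> occ3 a q p (phi a D)"
      using occ3_run[of a x "rev R" q p] False R by (simp add: adj_rev)
    also have "\<dots> \<longleftrightarrow> occ3 a q p (phi a (x # xs))"
      using occ3_barrier[OF phi_barrier[OF D] 2(4,3), of "x # rev R"] False
      unfolding R_def D_def by simp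
    finally show ?thesis .
  qed
qed simp

lemma wilf_phi:
  assumes "a \<le> p" "a \<le> q"
  shows "wilf_equiv [a,p,q] [a,q,p]"
proof (rule wilf_by_involution[where f = "phi a"])
  show "pat_le [a,p,q] w \<longleftrightarrow> pat_le [a,q,p] (phi a w)" for w
    unfolding pat_le_occ3 using assms by (rule phi_occ3)
qed (auto simp: pword_def)

definition dom_words :: "nat list \<Rightarrow> nat \<Rightarrow> nat list set" where
  "dom_words p m = {w. list_all2 (\<le>) p w \<and> sum_list w = m}"

(* comp_count n e m: number of words of length n over the naturals with sum m - e (zero when
   m < e).  As a function of m it is the coefficient sequence of x^e / (1 - x)^n. *)
definition comp_count :: "nat \<Rightarrow> nat \<Rightarrow> nat \<Rightarrow> nat" where
  "comp_count n e m = card {z :: nat list. length z = n \<and> sum_list z + e = m}"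

lemma comp_count_self: "comp_count n e e = 1"
proof -
  have "{z :: nat list. length z = n \<and> sum_list z + e = e} = {replicate n 0}"
    by (auto simp: sum_list_eq_0_iff intro: replicate_eqI)
  then show ?thesis unfolding comp_count_def by simp
qed

lemma comp_count_less: "m < e \<Longrightarrow> comp_count n e m = 0"
  unfolding comp_count_def by simp

(* Subtracting p letterwise counts the words dominating p. *)
lemma card_dom_words: "card (dom_words p m) = comp_count (length p) (sum_list p) m"
proof -
  let ?Z = "{z :: nat list. length z = length p \<and> sum_list z + sum_list p = m}"
  have "bij_betw (\<lambda>w. map2 (-) w p) (dom_words p m) ?Z"
  proof (rule bij_betw_byWitness[where f' = "\<lambda>z. map2 (+) z p"])
    have diff: "list_all2 (\<le>) p w \<Longrightarrow> map2 (+) (map2 (-) w p) p = w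
                  \<and> sum_list (map2 (-) w p) + sum_list p = sum_list w" for w :: "nat list"
      by (induction rule: list_all2_induct) auto
    have add: "length z = length p \<Longrightarrow> map2 (-) (map2 (+) z p) p = z
                 \<and> list_all2 (\<le>) p (map2 (+) z p) \<and> sum_list (map2 (+) z p) = sum_list z + sum_list p"
      for z :: "nat list"
      by (induction z p rule: list_induct2) auto
    show "\<forall>w\<in>dom_words p m. map2 (+) (map2 (-) w p) p = w"
      using diff unfolding dom_words_def by blast
    show "\<forall>z\<in>?Z. map2 (-) (map2 (+) z p) p = z"
      using add by blast
    show "(\<lambda>w. map2 (-) w p) ` dom_words p m \<subseteq> ?Z"
      using diff unfolding dom_words_def by (auto dest: list_all2_lengthD)
    show "(\<lambda>z. map2 (+) z p) ` ?Z \<subseteq> dom_words p m"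
      using add unfolding dom_words_def by auto
  qed
  then show ?thesis
    unfolding comp_count_def by (rule bij_betw_same_card)
qed

lemma finite_dom_words: "finite (dom_words p m)"
proof (rule finite_subset)
  show "dom_words p m \<subseteq> {w. set w \<subseteq> {0..m} \<and> length w = length p}"
    unfolding dom_words_def using member_le_sum_list by (fastforce dest: list_all2_lengthD)
  show "finite {w. set w \<subseteq> {0..m} \<and> length w = length p}"
    by (rule finite_lists_length_eq) simp
qed

lemma dom_words_Int:
  "length p = length q \<Longrightarrow> dom_words p m \<inter> dom_words q m = dom_words (map2 max p q) m"
  unfolding dom_words_def by (auto simp: list_all2_conv_all_nth)

definition pad :: "nat \<Rightarrow> nat \<Rightarrow> nat list \<Rightarrow> nat list" where
  "pad n i u = replicate i 1 @ u @ replicate (n - i - length u) 1"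

lemma list_all2_pad:
  assumes "pword u" "i + length u \<le> n" "length w = n"
  shows "list_all2 (\<le>) (pad n i u) w \<longleftrightarrow> pword w \<and> (\<forall>j<length u. u ! j \<le> w ! (i + j))"
proof -
  have len: "length (pad n i u) = n"
    using assms(2) by (simp add: pad_def)
  have entry: "pad n i u ! j = (if j < i \<or> i + length u \<le> j then 1 else u ! (j - i))"
    if "j < n" for j
    using that assms(2) by (auto simp: pad_def nth_append)
  have u1: "j < length u \<Longrightarrow> 1 \<le> u ! j" for j
    using assms(1) by (simp add: pword_def)
  show ?thesis
  proof
    assume le: "list_all2 (\<le>) (pad n i u) w"
    then have pt: "\<forall>j<n. pad n i u ! j \<le> w ! j"
      using len by (auto dest: list_all2_nthD)
    have "1 \<le> w ! j" if "j < n" for j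
    proof (cases "j < i \<or> i + length u \<le> j")
      case False
      then have "1 \<le> u ! (j - i)" by (intro u1) linarith
      then show ?thesis using pt[rule_format, OF that] entry[OF that] False by simp
    qed (use pt[rule_format, OF that] entry[OF that] in simp)
    then have "pword w"
      using assms(3) by (auto simp: pword_def in_set_conv_nth)
    moreover have "u ! j \<le> w ! (i + j)" if "j < length u" for j
      using pt[rule_format, of "i + j"] entry[of "i + j"] that assms(2) by auto
    ultimately show "pword w \<and> (\<forall>j<length u. u ! j \<le> w ! (i + j))"
      by blast
  next
    assume r: "pword w \<and> (\<forall>j<length u. u ! j \<le> w ! (i + j))"
    have "pad n i u ! j \<le> w ! j" if "j < n" for j
    proof (cases "j < i \<or> i + length u \<le> j")
      case True
      then show ?thesis using r that assms(3) entry[OF that] by (simp add: pword_def)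
    next
      case False
      then show ?thesis
        using r entry[OF that] by (metis add_diff_inverse_nat not_less add_less_cancel_left)
    qed
    then show "list_all2 (\<le>) (pad n i u) w"
      by (simp add: list_all2_conv_all_nth len assms(3))
  qed
qed

lemma occurrence_words:
  assumes "pword u"
  shows "{w. pword w \<and> pat_le u w \<and> length w = n \<and> sum_list w = m}
       = (\<Union>i\<in>{i. i + length u \<le> n}. dom_words (pad n i u) m)"
proof (rule set_eqI)
  fix w
  have len: "length (pad n i u) = n" if "i + length u \<le> n" for i
    using that by (simp add: pad_def)
  show "w \<in> {w. pword w \<and> pat_le u w \<and> length w = n \<and> sum_list w = m}
      \<longleftrightarrow> w \<in> (\<Union>i\<in>{i. i + length u \<le> n}. dom_words (pad n i u) m)"
  proof (cases "length w = n")
    case True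
    then show ?thesis
      using list_all2_pad[OF assms _ True] unfolding pat_le_def dom_words_def by auto
  next
    case False
    then show ?thesis
      using len unfolding dom_words_def by (auto dest: list_all2_lengthD)
  qed
qed

lemma pad_examples:
  "pad 3 0 [x,y,z] = [x,y,z]"
  "pad 4 0 [x,y,z] = [x,y,z,1]" "pad 4 1 [x,y,z] = [1,x,y,z]"
  "pad 5 0 [x,y,z] = [x,y,z,1,1]" "pad 5 1 [x,y,z] = [1,x,y,z,1]" "pad 5 2 [x,y,z] = [1,1,x,y,z]"
  by (simp_all add: pad_def numeral_eq_Suc)

lemma starts_3: "{i. i + length [x,y,z] \<le> 3} = {0}"
  and starts_4: "{i. i + length [x,y,z] \<le> 4} = {0, 1}"
  and starts_5: "{i. i + length [x,y,z] \<le> 5} = {0, 1, 2}"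
  by auto

lemma Fgen_occurrence_words:
  "pword u \<Longrightarrow> Fgen u n m = card (\<Union>i\<in>{i. i + length u \<le> n}. dom_words (pad n i u) m)"
  unfolding Fgen_def by (simp add: occurrence_words)

lemma card_Un3:
  assumes "finite A" "finite B" "finite C"
  shows "card (A \<union> B \<union> C) + card (A \<inter> B) + card (A \<inter> C) + card (B \<inter> C)
       = card A + card B + card C + card (A \<inter> B \<inter> C)"
proof -
  have "card (A \<union> B \<union> C) + card ((A \<union> B) \<inter> C) = card (A \<union> B) + card C"
    using assms card_Un_Int[of "A \<union> B" C] by simp
  moreover have "card (A \<union> B) + card (A \<inter> B) = card A + card B"
    using assms card_Un_Int[of A B] by simp
  moreover have "card ((A \<inter> C) \<union> (B \<inter> C)) + card ((A \<inter> C) \<inter> (B \<inter> C))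
               = card (A \<inter> C) + card (B \<inter> C)"
    using assms card_Un_Int[of "A \<inter> C" "B \<inter> C"] by simp
  moreover have "(A \<union> B) \<inter> C = (A \<inter> C) \<union> (B \<inter> C)" "(A \<inter> C) \<inter> (B \<inter> C) = A \<inter> B \<inter> C"
    by blast+
  ultimately show ?thesis
    by simp
qed

(* Weights of the lower-bound words for overlapping occurrences of [x,y,z]: shifted by one,
   shifted by two, and at all three positions of a word of length 5. *)
definition overlap1 :: "nat \<Rightarrow> nat \<Rightarrow> nat \<Rightarrow> nat" where
  "overlap1 x y z = x + max x y + max y z + z"

definition overlap2 :: "nat \<Rightarrow> nat \<Rightarrow> nat \<Rightarrow> nat" where
  "overlap2 x y z = x + y + max z x + y + z"

definition overlap12 :: "nat \<Rightarrow> nat \<Rightarrow> nat \<Rightarrow> nat" where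
  "overlap12 x y z = x + max x y + max (max y z) x + max y z + z"

lemma Fgen_length3:
  assumes "pword [x,y,z]"
  shows "Fgen [x,y,z] 3 m = comp_count 3 (x + y + z) m"
  using Fgen_occurrence_words[OF assms, of 3 m]
  unfolding starts_3 UN_insert UN_empty Un_empty_right pad_examples card_dom_words
  by (simp add: numeral_3_eq_3 add.assoc)

lemma Fgen_length4:
  assumes "pword [x,y,z]"
  shows "Fgen [x,y,z] 4 m + comp_count 4 (overlap1 x y z) m = 2 * comp_count 4 (x + y + z + 1) m"
proof -
  let ?A = "dom_words [x,y,z,1] m" and ?B = "dom_words [1,x,y,z] m"
  have "Fgen [x,y,z] 4 m = card (?A \<union> ?B)"
    using Fgen_occurrence_words[OF assms, of 4 m]
    unfolding starts_4 UN_insert UN_empty Un_empty_right pad_examples .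
  moreover have "card (?A \<union> ?B) + card (?A \<inter> ?B) = card ?A + card ?B"
    using card_Un_Int[OF finite_dom_words finite_dom_words] by simp
  moreover have "?A \<inter> ?B = dom_words [x, max x y, max y z, z] m"
    using assms
    by (simp add: dom_words_Int pword_def max_absorb1 max_absorb2 le_max_iff_disj max.commute
        max.left_commute max.assoc)
  ultimately show ?thesis
    by (simp add: card_dom_words overlap1_def algebra_simps numeral_eq_Suc)
qed

lemma Fgen_length5:
  assumes "pword [x,y,z]"
  shows "Fgen [x,y,z] 5 m + 2 * comp_count 5 (overlap1 x y z + 1) m
         + comp_count 5 (overlap2 x y z) m
       = 3 * comp_count 5 (x + y + z + 2) m + comp_count 5 (overlap12 x y z) m"
proof -
  let ?A = "dom_words [x,y,z,1,1] m" and ?B = "dom_words [1,x,y,z,1] m"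
    and ?C = "dom_words [1,1,x,y,z] m"
  have "Fgen [x,y,z] 5 m = card (?A \<union> ?B \<union> ?C)"
    using Fgen_occurrence_words[OF assms, of 5 m]
    unfolding starts_5 UN_insert UN_empty Un_empty_right pad_examples by (simp add: Un_assoc)
  moreover have "card (?A \<union> ?B \<union> ?C) + card (?A \<inter> ?B) + card (?A \<inter> ?C) + card (?B \<inter> ?C)
               = card ?A + card ?B + card ?C + card (?A \<inter> ?B \<inter> ?C)"
    by (intro card_Un3 finite_dom_words)
  moreover have "?A \<inter> ?B = dom_words [x, max x y, max y z, z, 1] m"
    and "?A \<inter> ?C = dom_words [x, y, max z x, y, z] m"
    and "?B \<inter> ?C = dom_words [1, x, max x y, max y z, z] m"
    and "?A \<inter> ?B \<inter> ?C = dom_words [x, max x y, max (max y z) x, max y z, z] m"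
    using assms
    by (simp_all add: dom_words_Int pword_def max_absorb1 max_absorb2 le_max_iff_disj max.commute
        max.left_commute max.assoc Int_assoc)
  ultimately show ?thesis
    by (simp add: card_dom_words overlap1_def overlap2_def overlap12_def algebra_simps numeral_eq_Suc)
qed

lemma sum_comp_count_at_min:
  "\<forall>e\<in>#P. e0 \<le> e \<Longrightarrow> (\<Sum>e\<in>#P. comp_count n e e0) = count P e0"
proof (induction P)
  case (add e P)
  have "comp_count n e e0 = (if e = e0 then 1 else 0)"
    using add.prems by (auto simp: comp_count_self comp_count_less)
  then show ?case using add by auto
qed simp

(* A sum of functions comp_count n e determines the multiset of its weights e: at the least
   weight the sum equals its multiplicity, so it can be peeled off by induction. *)
lemma comp_count_sums_inj:
  "(\<And>m. (\<Sum>e\<in>#P. comp_count n e m) = (\<Sum>e\<in>#Q. comp_count n e m)) \<Longrightarrow> P = Q"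
proof (induction "size P + size Q" arbitrary: P Q rule: less_induct)
  case less
  show ?case
  proof (cases "P = {#} \<and> Q = {#}")
    case False
    define e0 where "e0 = Min (set_mset P \<union> set_mset Q)"
    have e0: "e0 \<in> set_mset P \<union> set_mset Q" "\<forall>e\<in>set_mset P \<union> set_mset Q. e0 \<le> e"
    proof -
      have "set_mset P \<union> set_mset Q \<noteq> {}"
        using False by auto
      then show "e0 \<in> set_mset P \<union> set_mset Q"
        unfolding e0_def by (intro Min_in) simp_all
      show "\<forall>e\<in>set_mset P \<union> set_mset Q. e0 \<le> e"
        unfolding e0_def by simp
    qed
    have "count P e0 = count Q e0"
      using less.prems[of e0] sum_comp_count_at_min[of P e0 n] sum_comp_count_at_min[of Q e0 n]
        e0(2) by simp
    then have "e0 \<in># P" "e0 \<in># Q"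
      using e0(1) by (metis Un_iff count_greater_zero_iff)+
    then obtain P' Q' where P: "P = add_mset e0 P'" and Q: "Q = add_mset e0 Q'"
      by (metis mset_add)
    have "P' = Q'"
      by (rule less.hyps) (use less.prems in \<open>simp_all add: P Q\<close>)
    then show ?thesis using P Q by simp
  qed simp
qed

lemma comp_count_inj:
  "(\<And>m. comp_count n a m = comp_count n b m) \<Longrightarrow> a = b"
  using comp_count_sums_inj[of n "{#a#}" "{#b#}"] by simp

lemma comp_count_pair_inj:
  "(\<And>m. comp_count n a m + comp_count n b m = comp_count n c m + comp_count n d m)
   \<Longrightarrow> (a = c \<and> b = d) \<or> (a = d \<and> b = c)"
  using comp_count_sums_inj[of n "{#a, b#}" "{#c, d#}"]
  by (auto simp: add_eq_conv_diff split: if_splits)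

(* The invariants of a Wilf class read off from lengths 3, 4 and 5. *)
definition same_invariants :: "nat \<Rightarrow> nat \<Rightarrow> nat \<Rightarrow> nat \<Rightarrow> nat \<Rightarrow> nat \<Rightarrow> bool" where
  "same_invariants x y z x' y' z' \<longleftrightarrow>
     x + y + z = x' + y' + z' \<and> overlap1 x y z = overlap1 x' y' z' \<and>
     ((overlap2 x y z = overlap2 x' y' z' \<and> overlap12 x y z = overlap12 x' y' z') \<or>
      (overlap2 x y z = overlap12 x y z \<and> overlap2 x' y' z' = overlap12 x' y' z'))"

lemma wilf_same_invariants:
  assumes u: "pword [x,y,z]" and v: "pword [x',y',z']"
    and wilf: "wilf_equiv [x,y,z] [x',y',z']"
  shows "same_invariants x y z x' y' z'"
proof -
  have F: "Fgen [x,y,z] n m = Fgen [x',y',z'] n m" for n m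
    using wilf by (simp add: wilf_equiv_def)
  have sum: "x + y + z = x' + y' + z'"
    by (rule comp_count_inj[where n = 3]) (metis F Fgen_length3[OF u] Fgen_length3[OF v])
  have ov1: "overlap1 x y z = overlap1 x' y' z'"
  proof (rule comp_count_inj[where n = 4])
    show "comp_count 4 (overlap1 x y z) m = comp_count 4 (overlap1 x' y' z') m" for m
      using Fgen_length4[OF u, of m] Fgen_length4[OF v, of m] F[of 4 m] sum by simp
  qed
  have "(overlap2 x y z = overlap2 x' y' z' \<and> overlap12 x' y' z' = overlap12 x y z) \<or>
        (overlap2 x y z = overlap12 x y z \<and> overlap12 x' y' z' = overlap2 x' y' z')"
  proof (rule comp_count_pair_inj[where n = 5])
    show "comp_count 5 (overlap2 x y z) m + comp_count 5 (overlap12 x' y' z') m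
        = comp_count 5 (overlap2 x' y' z') m + comp_count 5 (overlap12 x y z) m" for m
      using Fgen_length5[OF u, of m] Fgen_length5[OF v, of m] F[of 5 m] sum ov1 by simp
  qed
  then show ?thesis
    unfolding same_invariants_def using sum ov1 by auto
qed

lemma invariants_aaa: "same_invariants a a a x y z \<Longrightarrow> x = a \<and> y = a \<and> z = a"
  unfolding same_invariants_def overlap1_def overlap2_def overlap12_def max_def
  by (auto split: if_splits)

lemma invariants_aab_up:
  "a < b \<Longrightarrow> same_invariants a a b x y z \<Longrightarrow>
    (x = a \<and> y = a \<and> z = b) \<or> (x = a \<and> y = b \<and> z = a) \<or> (x = b \<and> y = a \<and> z = a)"
  unfolding same_invariants_def overlap1_def overlap2_def overlap12_def max_def
  by (auto split: if_splits)

lemma invariants_aab_down: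
  "b < a \<Longrightarrow> same_invariants a a b x y z \<Longrightarrow>
    (x = a \<and> y = a \<and> z = b) \<or> (x = b \<and> y = a \<and> z = a)"
  unfolding same_invariants_def overlap1_def overlap2_def overlap12_def max_def
  by (auto split: if_splits)

lemma invariants_aba_down:
  "b < a \<Longrightarrow> same_invariants a b a x y z \<Longrightarrow> x = a \<and> y = b \<and> z = a"
  unfolding same_invariants_def overlap1_def overlap2_def overlap12_def max_def
  by (auto split: if_splits)

lemma invariants_bac:
  "a < b \<Longrightarrow> b < c \<Longrightarrow> same_invariants b a c x y z \<Longrightarrow>
    (x = b \<and> y = a \<and> z = c) \<or> (x = c \<and> y = a \<and> z = b)"
  unfolding same_invariants_def overlap1_def overlap2_def overlap12_def max_def
  by (auto split: if_splits)

lemma invariants_abc: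
  "a < b \<Longrightarrow> b < c \<Longrightarrow> same_invariants a b c x y z \<Longrightarrow>
    (x = a \<and> y = b \<and> z = c) \<or> (x = a \<and> y = c \<and> z = b) \<or>
    (x = c \<and> y = b \<and> z = a) \<or> (x = b \<and> y = c \<and> z = a)"
  unfolding same_invariants_def overlap1_def overlap2_def overlap12_def max_def
  by (auto split: if_splits)

lemma P3_iff: "v \<in> P3 \<longleftrightarrow> (\<exists>x y z. v = [x,y,z] \<and> 1 \<le> x \<and> 1 \<le> y \<and> 1 \<le> z)"
proof
  assume v: "v \<in> P3"
  then obtain x y z where "v = [x,y,z]"
    unfolding P3_def by (cases v; cases "tl v"; cases "tl (tl v)") (auto simp: numeral_3_eq_3)
  then show "\<exists>x y z. v = [x,y,z] \<and> 1 \<le> x \<and> 1 \<le> y \<and> 1 \<le> z"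
    using v unfolding P3_def pword_def by auto
qed (auto simp: P3_def pword_def)

definition is_wilf_class :: "nat list set \<Rightarrow> bool" where
  "is_wilf_class C \<longleftrightarrow> C \<noteq> {} \<and> (\<forall>u\<in>C. u \<in> P3 \<and> {v \<in> P3. wilf_equiv u v} = C)"

lemma is_wilf_classI:
  assumes r: "[a,b,c] \<in> C" and sub: "C \<subseteq> P3"
    and equiv: "\<forall>u\<in>C. wilf_equiv [a,b,c] u"
    and closed: "\<And>x y z. same_invariants a b c x y z \<Longrightarrow> [x,y,z] \<in> C"
  shows "is_wilf_class C"
proof -
  have abc: "pword [a,b,c]"
    using r sub unfolding P3_def by auto
  have closure: "v \<in> C" if "v \<in> P3" "wilf_equiv [a,b,c] v" for v
  proof -
    obtain x y z where v: "v = [x,y,z]"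
      using \<open>v \<in> P3\<close> unfolding P3_iff by blast
    have "same_invariants a b c x y z"
      using abc that unfolding v P3_def by (intro wilf_same_invariants) simp_all
    then show ?thesis
      unfolding v by (rule closed)
  qed
  have "{v \<in> P3. wilf_equiv u v} = C" if "u \<in> C" for u
  proof -
    have "wilf_equiv u v \<longleftrightarrow> wilf_equiv [a,b,c] v" for v
      using equiv that by (meson wilf_sym wilf_trans)
    then show ?thesis
      using closure sub equiv by blast
  qed
  then show ?thesis
    unfolding is_wilf_class_def using r sub by blast
qed

lemma class_aaa: "1 \<le> a \<Longrightarrow> is_wilf_class {[a,a,a]}"
  by (rule is_wilf_classI[of a a a]) (auto simp: P3_iff wilf_refl dest: invariants_aaa)

lemma class_aab_up: "1 \<le> a \<Longrightarrow> a < b \<Longrightarrow> is_wilf_class {[a,a,b],[a,b,a],[b,a,a]}"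
  by (rule is_wilf_classI[of a a b])
    (auto simp: P3_iff wilf_refl wilf_rev wilf_phi dest: invariants_aab_up)

lemma class_aab_down: "1 \<le> b \<Longrightarrow> b < a \<Longrightarrow> is_wilf_class {[a,a,b],[b,a,a]}"
  by (rule is_wilf_classI[of a a b])
    (auto simp: P3_iff wilf_refl wilf_rev dest: invariants_aab_down)

lemma class_aba_down: "1 \<le> b \<Longrightarrow> b < a \<Longrightarrow> is_wilf_class {[a,b,a]}"
  by (rule is_wilf_classI[of a b a]) (auto simp: P3_iff wilf_refl dest: invariants_aba_down)

lemma class_bac: "1 \<le> a \<Longrightarrow> a < b \<Longrightarrow> b < c \<Longrightarrow> is_wilf_class {[b,a,c],[c,a,b]}"
  by (rule is_wilf_classI[of b a c]) (auto simp: P3_iff wilf_refl wilf_rev dest: invariants_bac)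

lemma class_abc:
  assumes "1 \<le> a" "a < b" "b < c"
  shows "is_wilf_class {[a,b,c],[a,c,b],[c,b,a],[b,c,a]}"
proof (rule is_wilf_classI[of a b c])
  have acb: "wilf_equiv [a,b,c] [a,c,b]"
    using assms by (intro wilf_phi) simp_all
  moreover have "wilf_equiv [a,b,c] [b,c,a]"
    using wilf_trans[OF acb wilf_rev[of a c b]] .
  ultimately show "\<forall>u\<in>{[a,b,c],[a,c,b],[c,b,a],[b,c,a]}. wilf_equiv [a,b,c] u"
    using wilf_refl wilf_rev[of a b c] by auto
qed (use assms in \<open>auto simp: P3_iff dest: invariants_abc\<close>)

lemma listed_classes_wilf: "C \<in> listed_classes \<Longrightarrow> is_wilf_class C"
  unfolding listed_classes_def
  by (elim UnE CollectE exE conjE;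
      simp only: class_aaa class_aab_up class_aab_down class_aba_down class_bac class_abc)

lemma listed_classesI:
  "1 \<le> a \<Longrightarrow> {[a,a,a]} \<in> listed_classes"
  "1 \<le> a \<Longrightarrow> a < b \<Longrightarrow> {[a,a,b],[a,b,a],[b,a,a]} \<in> listed_classes"
  "1 \<le> b \<Longrightarrow> b < a \<Longrightarrow> {[a,a,b],[b,a,a]} \<in> listed_classes"
  "1 \<le> b \<Longrightarrow> b < a \<Longrightarrow> {[a,b,a]} \<in> listed_classes"
  "1 \<le> a \<Longrightarrow> a < b \<Longrightarrow> b < c \<Longrightarrow> {[b,a,c],[c,a,b]} \<in> listed_classes"
  "1 \<le> a \<Longrightarrow> a < b \<Longrightarrow> b < c \<Longrightarrow> {[a,b,c],[a,c,b],[c,b,a],[b,c,a]} \<in> listed_classes"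
  unfolding listed_classes_def
  subgoal by (intro UnI1) blast
  subgoal by (rule UnI1, rule UnI1, rule UnI1, rule UnI1, rule UnI2) blast
  subgoal by (rule UnI1, rule UnI1, rule UnI1, rule UnI2) blast
  subgoal by (rule UnI1, rule UnI1, rule UnI2) blast
  subgoal by (rule UnI1, rule UnI2) blast
  subgoal by (rule UnI2) blast
  done

lemma listed_classes_cover:
  assumes "u \<in> P3"
  shows "\<exists>C\<in>listed_classes. u \<in> C"
proof -
  obtain x y z where u: "u = [x,y,z]" and pos: "1 \<le> x" "1 \<le> y" "1 \<le> z"
    using assms unfolding P3_iff by blast
  consider "x = y" "y = z" | "x = y" "y < z" | "x = z" "x < y" | "y = z" "y < x"
    | "x = y" "z < y" | "y = z" "x < y" | "x = z" "y < x"
    | "x < y" "y < z" | "x < z" "z < y" | "z < y" "y < x" | "y < z" "z < x" | "y < x" "x < z"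
    | "z < x" "x < y"
    by (cases x y rule: linorder_cases; cases y z rule: linorder_cases; cases x z rule: linorder_cases) auto
  then show ?thesis
  proof cases
    case 1 show ?thesis by (rule bexI[OF _ listed_classesI(1)[of x]]) (use 1 pos u in simp_all)
  next case 2 show ?thesis by (rule bexI[OF _ listed_classesI(2)[of x z]]) (use 2 pos u in simp_all)
  next case 3 show ?thesis by (rule bexI[OF _ listed_classesI(2)[of x y]]) (use 3 pos u in simp_all)
  next case 4 show ?thesis by (rule bexI[OF _ listed_classesI(2)[of y x]]) (use 4 pos u in simp_all)
  next case 5 show ?thesis by (rule bexI[OF _ listed_classesI(3)[of z x]]) (use 5 pos u in simp_all)
  next case 6 show ?thesis by (rule bexI[OF _ listed_classesI(3)[of x y]]) (use 6 pos u in simp_all)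
  next case 7 show ?thesis by (rule bexI[OF _ listed_classesI(4)[of y x]]) (use 7 pos u in simp_all)
  next case 8 show ?thesis by (rule bexI[OF _ listed_classesI(6)[of x y z]]) (use 8 pos u in simp_all)
  next case 9 show ?thesis by (rule bexI[OF _ listed_classesI(6)[of x z y]]) (use 9 pos u in simp_all)
  next case 10 show ?thesis by (rule bexI[OF _ listed_classesI(6)[of z y x]]) (use 10 pos u in simp_all)
  next case 11 show ?thesis by (rule bexI[OF _ listed_classesI(5)[of y z x]]) (use 11 pos u in simp_all)
  next case 12 show ?thesis by (rule bexI[OF _ listed_classesI(5)[of y x z]]) (use 12 pos u in simp_all)
  next case 13 show ?thesis by (rule bexI[OF _ listed_classesI(6)[of z x y]]) (use 13 pos u in simp_all)
  qed
qed

theorem theorem7: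
  shows "{{v \<in> P3. wilf_equiv u v} | u. u \<in> P3} = listed_classes"
proof (rule set_eqI, rule iffI)
  fix C assume "C \<in> {{v \<in> P3. wilf_equiv u v} | u. u \<in> P3}"
  then obtain u where u: "u \<in> P3" and C: "C = {v \<in> P3. wilf_equiv u v}"
    by blast
  obtain D where D: "D \<in> listed_classes" "u \<in> D"
    using listed_classes_cover[OF u] by blast
  have "C = D"
    using listed_classes_wilf[OF D(1)] D(2) C unfolding is_wilf_class_def by blast
  then show "C \<in> listed_classes"
    using D(1) by simp
next
  fix C assume "C \<in> listed_classes"
  then have "is_wilf_class C"
    by (rule listed_classes_wilf)
  then obtain u where "u \<in> P3" "C = {v \<in> P3. wilf_equiv u v}"
    unfolding is_wilf_class_def by blast
  then show "C \<in> {{v \<in> P3. wilf_equiv u v} | u. u \<in> P3}"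
    by blast
qed

end
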